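(* Let $(\mathfrak{A},\varphi,\tau)$ be a $*$-dynamical system, and let $A\in\mathfrak{A}$ and $\varepsilon>0$. Then the set $$E=\left\{k\in\mathbb{N}:\left|\varphi\left(A^*\tau^k(A)\right)\right|>\left|\varphi(A)\right|^2-\varepsilon\right\}$$ is relatively dense in $\mathbb{N}=\{1,2,3,\dots\}$.
   Context: All algebras are over $\mathbb{C}$. A unital $*$-algebra is a complex algebra with an involution $*$ and a unit $1$. A state on a unital $*$-algebra $\mathfrak{A}$ is a linear functional $\varphi$ with $\varphi(A^*A)\ge0$ for all $A$ and $\varphi(1)=1$. A $*$-dynamical system is a triple $(\mathfrak{A},\varphi,\tau)$ where $\mathfrak{A}$ is a unital $*$-algebra, $\varphi$ a state on $\mathfrak{A}$, and $\tau:\mathfrak{A}\to\mathfrak{A}$ a linear map (not necessarily multiplicative) with $\tau(1)=1$ and $\varphi(\tau(A)^*\tau(A))\le\varphi(A^*A)$ for all $A\in\mathfrak{A}$. A set $E\subseteq\mathbb{N}$ is relatively dense in $\mathbb{N}$ if there exists $n\in\mathbb{N}$ such that $E\cap\{j,\dots,j+n-1\}\neq\emptyset$ for every $j\in\mathbb{N}$. *)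

theory Defs
  imports Complex_Main
begin

definition unital_star_algebra :: "(complex \<Rightarrow> 'a::ring_1 \<Rightarrow> 'a) \<Rightarrow> ('a \<Rightarrow> 'a) \<Rightarrow> bool" where
  "unital_star_algebra sm st \<longleftrightarrow>
     (\<forall>a x y. sm a (x + y) = sm a x + sm a y) \<and>
     (\<forall>a b x. sm (a + b) x = sm a x + sm b x) \<and>
     (\<forall>a b x. sm (a * b) x = sm a (sm b x)) \<and>
     (\<forall>x. sm 1 x = x) \<and>
     (\<forall>a x y. sm a (x * y) = sm a x * y) \<and>
     (\<forall>a x y. sm a (x * y) = x * sm a y) \<and>
     (\<forall>x. st (st x) = x) \<and>
     (\<forall>x y. st (x + y) = st x + st y) \<and>
     (\<forall>a x. st (sm a x) = sm (cnj a) (st x)) \<and>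
     (\<forall>x y. st (x * y) = st y * st x)"

definition complex_linear :: "(complex \<Rightarrow> 'a::ring_1 \<Rightarrow> 'a) \<Rightarrow> (complex \<Rightarrow> 'b::ring_1 \<Rightarrow> 'b) \<Rightarrow> ('a \<Rightarrow> 'b) \<Rightarrow> bool" where
  "complex_linear smA smB f \<longleftrightarrow>
     (\<forall>x y. f (x + y) = f x + f y) \<and> (\<forall>c x. f (smA c x) = smB c (f x))"

definition state :: "(complex \<Rightarrow> 'a::ring_1 \<Rightarrow> 'a) \<Rightarrow> ('a \<Rightarrow> 'a) \<Rightarrow> ('a \<Rightarrow> complex) \<Rightarrow> bool" where
  "state sm st \<phi> \<longleftrightarrow>
     complex_linear sm (*) \<phi> \<and>
     (\<forall>x. Im (\<phi> (st x * x)) = 0 \<and> Re (\<phi> (st x * x)) \<ge> 0) \<and>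
     \<phi> 1 = 1"

text \<open>A *-dynamical system (A, phi, tau). Since phi is a state, both sides of the
Schwarz-type inequality are nonnegative reals, so comparing real parts is exact.\<close>
definition star_dynamical_system ::
  "(complex \<Rightarrow> 'a::ring_1 \<Rightarrow> 'a) \<Rightarrow> ('a \<Rightarrow> 'a) \<Rightarrow> ('a \<Rightarrow> complex) \<Rightarrow> ('a \<Rightarrow> 'a) \<Rightarrow> bool" where
  "star_dynamical_system sm st \<phi> \<tau> \<longleftrightarrow>
     unital_star_algebra sm st \<and> state sm st \<phi> \<and>
     complex_linear sm sm \<tau> \<and> \<tau> 1 = 1 \<and>
     (\<forall>x. Re (\<phi> (st (\<tau> x) * \<tau> x)) \<le> Re (\<phi> (st x * x)))"

definition relatively_dense :: "nat set \<Rightarrow> bool" where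
  "relatively_dense E \<longleftrightarrow> (\<exists>n::nat. n \<ge> 1 \<and> (\<forall>j::nat. j \<ge> 1 \<longrightarrow> E \<inter> {j..<j+n} \<noteq> {}))"

end

(* The state makes the algebra a semi-inner product space, <a, b> = phi (a* b), on which tau
   is a linear contraction fixing the unit vector 1.  In such a space let w nearly minimise the
   seminorm on the convex hull of the orbit of x.  By the parallelogram law w is almost invariant
   under the Cesaro means M_j,n = (1/n) sum_{k<n} T^(j+k), and M_j,n x - M_j,n w = O(1/n)
   uniformly in j, so for one n all M_j,n x lie close to w.  Minimality gives Re <x, w> >~ |w|^2,
   and |w|^2 >= |<1, w>|^2 = |phi x|^2 because a contraction fixing 1 preserves <1, .>.  Hence
   every window of n consecutive k contains one with Re <x, T^k x> > |phi x|^2 - eps.  The near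
   minimiser stands in for the projection onto the invariant vectors in the mean ergodic
   theorem, so no completeness is needed. *)

theory Submission
  imports Defs
begin

lemma exists_inverse_square_le:
  assumes "\<eta> > 0"
  obtains n :: nat where "n \<ge> 1" and "K / (real n)\<^sup>2 \<le> \<eta>"
proof -
  define c where "c = max 0 K"
  obtain m :: nat where "c / \<eta> < real m"
    using reals_Archimedean2 by blast
  then have "c < \<eta> * real m"
    using assms by (simp add: pos_divide_less_eq mult.commute)
  also have "\<dots> \<le> \<eta> * real (Suc m)"
    using assms by simp
  finally have "c / real (Suc m) \<le> \<eta>"
    by (simp add: pos_divide_le_eq mult.commute)
  moreover have "K / (real (Suc m))\<^sup>2 \<le> c / real (Suc m)"
    by (rule frac_le) (auto simp: c_def power2_eq_square)
  ultimately show ?thesis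
    using that[of "Suc m"] by simp
qed

lemma exists_gt_of_mean_gt:
  fixes f :: "nat \<Rightarrow> real"
  assumes "n \<ge> 1" and "(\<Sum>k<n. f k) / real n > c"
  shows "\<exists>k<n. f k > c"
proof (rule ccontr)
  assume "\<not> (\<exists>k<n. f k > c)"
  then have "(\<Sum>k<n. f k) \<le> (\<Sum>k<n. c)"
    by (intro sum_mono) (meson lessThan_iff not_less)
  then show False
    using assms by (simp add: pos_less_divide_eq mult.commute)
qed

lemma relatively_dense_intro:
  assumes "n \<ge> 1" and "\<And>j. \<exists>k<n. P (j + k)"
  shows "relatively_dense {k. k \<ge> 1 \<and> P k}"
  unfolding relatively_dense_def
proof (intro exI[of _ n] conjI allI impI)
  fix j :: nat
  assume "j \<ge> 1"
  moreover obtain k where "k < n" "P (j + k)"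
    using assms(2) by blast
  ultimately have "j + k \<in> {k. k \<ge> 1 \<and> P k} \<inter> {j..<j + n}"
    by simp
  then show "{k. k \<ge> 1 \<and> P k} \<inter> {j..<j + n} \<noteq> {}"
    by blast
qed (fact assms(1))

lemma relatively_dense_mono: "relatively_dense E \<Longrightarrow> E \<subseteq> F \<Longrightarrow> relatively_dense F"
  unfolding relatively_dense_def by blast

locale semi_inner_space = module scale
  for scale :: "complex \<Rightarrow> 'a::ab_group_add \<Rightarrow> 'a" (infixr \<open>*s\<close> 75) +
  fixes inner :: "'a \<Rightarrow> 'a \<Rightarrow> complex"
  assumes inner_add_left: "inner (x + y) z = inner x z + inner y z"
    and inner_add_right: "inner x (y + z) = inner x y + inner x z"
    and inner_scale_left: "inner (c *s x) y = cnj c * inner x y"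
    and inner_scale_right: "inner x (c *s y) = c * inner x y"
    and inner_self_real: "Im (inner x x) = 0"
    and inner_self_nonneg: "0 \<le> Re (inner x x)"
begin

lemma additive_inner_left: "additive (\<lambda>x. inner x y)"
  by unfold_locales (rule inner_add_left)

lemma additive_inner_right: "additive (inner x)"
  by unfold_locales (rule inner_add_right)

lemmas inner_diff_left = additive.diff[OF additive_inner_left]
  and inner_diff_right = additive.diff[OF additive_inner_right]
  and inner_sum_right = additive.sum[OF additive_inner_right]

lemma inner_commute: "inner y x = cnj (inner x y)"
proof -
  have "Im (inner (x + y) (x + y)) = 0" "Im (inner (x + \<i> *s y) (x + \<i> *s y)) = 0"
    by (rule inner_self_real)+
  then have "Im (inner x y) + Im (inner y x) = 0" "Re (inner x y) - Re (inner y x) = 0"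
    by (simp_all add: inner_add_left inner_add_right inner_scale_left inner_scale_right inner_self_real)
  then show ?thesis by (simp add: complex_eq_iff)
qed

lemma Re_inner_commute: "Re (inner y x) = Re (inner x y)"
  by (subst inner_commute) simp

definition norm2 :: "'a \<Rightarrow> real" where
  "norm2 x = Re (inner x x)"

lemma norm2_nonneg: "0 \<le> norm2 x"
  unfolding norm2_def by (rule inner_self_nonneg)

lemma norm2_zero [simp]: "norm2 0 = 0"
  by (simp add: norm2_def additive.zero[OF additive_inner_right])

lemma norm2_add: "norm2 (x + y) = norm2 x + 2 * Re (inner x y) + norm2 y"
  using Re_inner_commute[of x y] unfolding norm2_def by (simp add: inner_add_left inner_add_right)

lemma norm2_diff: "norm2 (x - y) = norm2 x - 2 * Re (inner x y) + norm2 y"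
  using Re_inner_commute[of x y] unfolding norm2_def by (simp add: inner_diff_left inner_diff_right)

lemma norm2_scale: "norm2 (c *s x) = (cmod c)\<^sup>2 * norm2 x"
proof -
  have "inner (c *s x) (c *s x) = (c * cnj c) * inner x x"
    by (simp add: inner_scale_left inner_scale_right ac_simps)
  also have "c * cnj c = of_real ((cmod c)\<^sup>2)"
    by (rule complex_norm_square[symmetric])
  finally have "inner (c *s x) (c *s x) = of_real ((cmod c)\<^sup>2) * inner x x" .
  then show ?thesis unfolding norm2_def by simp
qed

lemma norm2_of_real_scale: "norm2 (of_real r *s x) = r\<^sup>2 * norm2 x"
  by (simp add: norm2_scale)

lemma norm2_parallelogram: "norm2 (x + y) + norm2 (x - y) = 2 * norm2 x + 2 * norm2 y"
  by (simp add: norm2_add norm2_diff)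

lemma norm2_add_le: "norm2 (x + y) \<le> 2 * norm2 x + 2 * norm2 y"
  using norm2_parallelogram[of x y] norm2_nonneg[of "x - y"] by linarith

lemma norm2_diff_le: "norm2 (x - y) \<le> 2 * norm2 x + 2 * norm2 y"
  using norm2_parallelogram[of x y] norm2_nonneg[of "x + y"] by linarith

lemma norm2_convex:
  assumes "0 \<le> t" "t \<le> 1"
  shows "norm2 (of_real t *s x + of_real (1 - t) *s y) \<le> t * norm2 x + (1 - t) * norm2 y"
proof -
  have "norm2 (of_real t *s x + of_real (1 - t) *s y)
      = t\<^sup>2 * norm2 x + 2 * t * (1 - t) * Re (inner x y) + (1 - t)\<^sup>2 * norm2 y"
    by (simp add: norm2_add norm2_of_real_scale inner_scale_left inner_scale_right del: of_real_diff)
  then have "t * norm2 x + (1 - t) * norm2 y - norm2 (of_real t *s x + of_real (1 - t) *s y)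
      = t * (1 - t) * norm2 (x - y)"
    by (simp add: norm2_diff algebra_simps power2_eq_square)
  moreover have "0 \<le> t * (1 - t) * norm2 (x - y)"
    using assms norm2_nonneg by simp
  ultimately show ?thesis by linarith
qed

lemma two_Re_inner_ge:
  assumes "r > 0"
  shows "- (r * norm2 x + norm2 y / r) \<le> 2 * Re (inner x y)"
proof -
  have "0 \<le> norm2 (of_real r *s x + y)" by (rule norm2_nonneg)
  also have "\<dots> = r\<^sup>2 * norm2 x + 2 * r * Re (inner x y) + norm2 y"
    by (simp add: norm2_add norm2_of_real_scale inner_scale_left)
  also have "\<dots> = r * (r * norm2 x + 2 * Re (inner x y) + norm2 y / r)"
    using assms by (simp add: field_simps power2_eq_square)
  finally show ?thesis
    using assms by (simp add: zero_le_mult_iff)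
qed

lemma cmod_inner_unit_le:
  assumes "norm2 e = 1"
  shows "(cmod (inner e x))\<^sup>2 \<le> norm2 x"
proof -
  define c where "c = inner e x"
  have "0 \<le> norm2 (x - c *s e)" by (rule norm2_nonneg)
  also have "\<dots> = norm2 x - 2 * Re (c * cnj c) + (cmod c)\<^sup>2"
    using assms by (simp add: norm2_diff norm2_scale inner_scale_right inner_commute[of e x] c_def)
  also have "Re (c * cnj c) = (cmod c)\<^sup>2"
    by (metis Re_complex_of_real complex_norm_square)
  finally show ?thesis unfolding c_def by simp
qed

lemma convex_combination_diff:
  "of_real t *s x + of_real (1 - t) *s y - z = of_real t *s (x - z) + of_real (1 - t) *s (y - z)"
  by (simp add: algebra_simps)

definition convex_set :: "'a set \<Rightarrow> bool" where
  "convex_set S \<longleftrightarrow>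
     (\<forall>x\<in>S. \<forall>y\<in>S. \<forall>t. 0 \<le> t \<and> t \<le> 1 \<longrightarrow> of_real t *s x + of_real (1 - t) *s y \<in> S)"

lemma convex_setD:
  "convex_set S \<Longrightarrow> x \<in> S \<Longrightarrow> y \<in> S \<Longrightarrow> 0 \<le> t \<Longrightarrow> t \<le> 1 \<Longrightarrow>
    of_real t *s x + of_real (1 - t) *s y \<in> S"
  unfolding convex_set_def by blast

lemma convex_set_norm2_sublevel:
  assumes "convex_set S"
  shows "convex_set {x \<in> S. norm2 x \<le> r}"
  unfolding convex_set_def
proof (intro ballI allI impI)
  fix x y and t :: real
  assume x: "x \<in> {x \<in> S. norm2 x \<le> r}" and y: "y \<in> {x \<in> S. norm2 x \<le> r}"
    and t: "0 \<le> t \<and> t \<le> 1"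
  have "norm2 (of_real t *s x + of_real (1 - t) *s y) \<le> t * norm2 x + (1 - t) * norm2 y"
    using t by (intro norm2_convex) auto
  also have "\<dots> \<le> t * r + (1 - t) * r"
    using x y t by (intro add_mono mult_left_mono) auto
  finally show "of_real t *s x + of_real (1 - t) *s y \<in> {x \<in> S. norm2 x \<le> r}"
    using convex_setD[OF assms] x y t by (auto simp: algebra_simps)
qed

lemma convex_set_mean:
  assumes "convex_set S" and "n \<ge> 1" and "\<And>k. k < n \<Longrightarrow> f k \<in> S"
  shows "of_real (1 / real n) *s (\<Sum>k<n. f k) \<in> S"
  using assms(2,3)
proof (induction n rule: nat_induct_at_least)
  case base
  then show ?case by simp
next
  case (Suc n)
  define t where "t = real n / real (Suc n)"
  have "of_real t *s (of_real (1 / real n) *s (\<Sum>k<n. f k)) + of_real (1 - t) *s f n \<in> S"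
    using Suc by (intro convex_setD[OF assms(1)]) (auto simp: t_def)
  moreover have "t * (1 / real n) = 1 / real (Suc n)" "1 - t = 1 / real (Suc n)"
    using Suc.hyps by (simp_all add: t_def field_simps)
  then have "of_real t *s (of_real (1 / real n) *s (\<Sum>k<n. f k)) + of_real (1 - t) *s f n
      = of_real (1 / real (Suc n)) *s (\<Sum>k<Suc n. f k)"
    by (simp only: scale_scale of_real_mult[symmetric] sum.lessThan_Suc scale_right_distrib)
  ultimately show ?case
    by simp
qed

lemma exists_near_minimizer:
  assumes "S \<noteq> {}" and "\<delta> > 0"
  obtains w where "w \<in> S" and "\<And>z. z \<in> S \<Longrightarrow> norm2 w < norm2 z + \<delta>"
proof -
  have bdd: "bdd_below (norm2 ` S)"
    by (rule bdd_belowI[of _ 0]) (auto simp: norm2_nonneg)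
  obtain w where "w \<in> S" "norm2 w < Inf (norm2 ` S) + \<delta>"
    using cInf_less_iff[OF _ bdd, of "Inf (norm2 ` S) + \<delta>"] assms by auto
  moreover have "Inf (norm2 ` S) \<le> norm2 z" if "z \<in> S" for z
    using bdd that by (auto intro: cInf_lower)
  ultimately show ?thesis
    using that by fastforce
qed

lemma near_minimizer_Re_inner:
  assumes "convex_set S" and "w \<in> S" "x \<in> S"
    and near_min: "\<And>z. z \<in> S \<Longrightarrow> norm2 w < norm2 z + \<delta>"
    and t: "0 < t" "t \<le> 1"
  shows "Re (inner x w) > norm2 w - \<delta> / (2 * t) - t * norm2 (x - w) / 2"
proof -
  have "of_real t *s x + of_real (1 - t) *s w \<in> S"
    using assms by (intro convex_setD) auto
  moreover have "of_real t *s x + of_real (1 - t) *s w = w + of_real t *s (x - w)"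
    by (simp add: algebra_simps)
  ultimately have "norm2 w < norm2 (w + of_real t *s (x - w)) + \<delta>"
    using near_min by metis
  also have "norm2 (w + of_real t *s (x - w))
      = norm2 w + 2 * t * Re (inner w (x - w)) + t\<^sup>2 * norm2 (x - w)"
    by (simp add: norm2_add norm2_of_real_scale inner_scale_right)
  also have "Re (inner w (x - w)) = Re (inner x w) - norm2 w"
    by (simp add: inner_diff_right Re_inner_commute[of w x] norm2_def)
  finally have "2 * t * (norm2 w - Re (inner x w)) < \<delta> + t\<^sup>2 * norm2 (x - w)"
    by (simp add: algebra_simps)
  then have "norm2 w - Re (inner x w) < (\<delta> + t\<^sup>2 * norm2 (x - w)) / (2 * t)"
    using t by (simp add: pos_less_divide_eq mult.commute)
  moreover have "(\<delta> + t\<^sup>2 * norm2 (x - w)) / (2 * t) = \<delta> / (2 * t) + t * norm2 (x - w) / 2"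
    using t by (simp add: field_simps power2_eq_square)
  ultimately show ?thesis
    by linarith
qed

lemma near_minimizer_close:
  assumes "convex_set S" and "w \<in> S" "x \<in> S"
    and near_min: "\<And>z. z \<in> S \<Longrightarrow> norm2 w < norm2 z + \<delta>"
    and "norm2 x \<le> norm2 w"
  shows "norm2 (x - w) < 4 * \<delta>"
proof -
  have "of_real (1 / 2) *s x + of_real (1 - 1 / 2) *s w \<in> S"
    using assms by (intro convex_setD) auto
  then have "norm2 w < norm2 (of_real (1 / 2) *s (x + w)) + \<delta>"
    using near_min by (simp add: scale_right_distrib)
  then have "4 * norm2 w < norm2 (x + w) + 4 * \<delta>"
    by (simp add: norm2_scale power2_eq_square)
  then show ?thesis
    using norm2_parallelogram[of x w] assms(5) by linarith
qed

end

locale semi_inner_contraction = semi_inner_space +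
  fixes T :: "'a \<Rightarrow> 'a"
  assumes T_linear: "module_hom scale scale T"
    and norm2_T_le: "norm2 (T x) \<le> norm2 x"
begin

lemma funpow_linear: "module_hom scale scale (T ^^ n)"
proof (induction n)
  case 0
  show ?case by (simp add: module_hom_ident)
next
  case (Suc n)
  show ?case
    unfolding funpow.simps(2) by (rule module_hom_compose[OF Suc T_linear])
qed

lemmas funpow_add = module_hom.add[OF funpow_linear]
  and funpow_scale = module_hom.scale[OF funpow_linear]

lemma norm2_funpow_le: "norm2 ((T ^^ n) x) \<le> norm2 x"
  by (induction n) (auto intro: order_trans[OF norm2_T_le])

lemma inner_T_fixed_point:
  assumes "T e = e"
  shows "inner e (T x) = inner e x"
proof -
  (* the contraction applied to e + c x with c = s cnj a bounds 2 s |a|^2 by s^2 |a|^2 norm2 x,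
     for every s > 0; letting s tend to 0 forces a = 0 *)
  define a where "a = inner e (T x) - inner e x"
  have bound: "2 * (cmod a)\<^sup>2 \<le> s * (cmod a)\<^sup>2 * norm2 x" if "s > 0" for s
  proof -
    define c where "c = of_real s * cnj a"
    have "T (e + c *s x) = e + c *s T x"
      using assms by (simp add: module_hom.add[OF T_linear] module_hom.scale[OF T_linear])
    then have "norm2 (e + c *s T x) \<le> norm2 (e + c *s x)"
      by (metis norm2_T_le)
    then have le: "2 * Re (c * a) + (cmod c)\<^sup>2 * norm2 (T x) \<le> (cmod c)\<^sup>2 * norm2 x"
      by (simp add: norm2_add norm2_scale inner_scale_right a_def algebra_simps)
    have "c * a = of_real (s * (cmod a)\<^sup>2)"
      unfolding c_def of_real_mult complex_norm_square by (simp add: ac_simps)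
    then have re: "Re (c * a) = s * (cmod a)\<^sup>2"
      by simp
    have sq: "(cmod c)\<^sup>2 = s\<^sup>2 * (cmod a)\<^sup>2"
      using that by (simp add: c_def norm_mult power_mult_distrib)
    have "0 \<le> (cmod c)\<^sup>2 * norm2 (T x)"
      by (simp add: norm2_nonneg)
    then have "s * (2 * (cmod a)\<^sup>2) \<le> s * (s * (cmod a)\<^sup>2 * norm2 x)"
      using le unfolding re sq by (simp add: power2_eq_square ac_simps)
    then show ?thesis
      using that by simp
  qed
  have "(cmod a)\<^sup>2 \<le> 0"
  proof (rule ccontr)
    assume pos: "\<not> (cmod a)\<^sup>2 \<le> 0"
    define s where "s = 1 / (norm2 x + 1)"
    have "s > 0" "s * norm2 x < 1"
      using norm2_nonneg[of x] by (simp_all add: s_def field_simps)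
    then have "s * (cmod a)\<^sup>2 * norm2 x < (cmod a)\<^sup>2"
      using pos by (simp add: mult.commute mult.left_commute)
    then show False
      using bound[OF \<open>s > 0\<close>] pos by linarith
  qed
  then show ?thesis
    unfolding a_def by simp
qed

lemma inner_funpow_fixed_point: "T e = e \<Longrightarrow> inner e ((T ^^ n) x) = inner e x"
  by (induction n) (simp_all add: inner_T_fixed_point)

inductive_set orbit_hull :: "'a \<Rightarrow> 'a set" for x where
  orbit: "(T ^^ k) x \<in> orbit_hull x"
| convex: "y \<in> orbit_hull x \<Longrightarrow> z \<in> orbit_hull x \<Longrightarrow> 0 \<le> t \<Longrightarrow> t \<le> 1 \<Longrightarrow>
    of_real t *s y + of_real (1 - t) *s z \<in> orbit_hull x"

lemma self_in_orbit_hull: "x \<in> orbit_hull x"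
  using orbit_hull.orbit[of 0] by simp

lemma convex_set_orbit_hull: "convex_set (orbit_hull x)"
  unfolding convex_set_def by (blast intro: orbit_hull.convex)

lemma orbit_hull_T_closed: "y \<in> orbit_hull x \<Longrightarrow> T y \<in> orbit_hull x"
proof (induction rule: orbit_hull.induct)
  case (orbit k)
  then show ?case using orbit_hull.orbit[of "Suc k"] by simp
next
  case (convex y z t)
  then show ?case
    using orbit_hull.convex[of "T y" x "T z" t]
    by (simp add: module_hom.add[OF T_linear] module_hom.scale[OF T_linear])
qed

lemma orbit_hull_funpow_closed: "y \<in> orbit_hull x \<Longrightarrow> (T ^^ n) y \<in> orbit_hull x"
  by (induction n) (auto intro: orbit_hull_T_closed)

lemma norm2_orbit_hull_le: "y \<in> orbit_hull x \<Longrightarrow> norm2 y \<le> norm2 x"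
proof (induction rule: orbit_hull.induct)
  case (orbit k)
  then show ?case by (rule norm2_funpow_le)
next
  case (convex y z t)
  have "norm2 (of_real t *s y + of_real (1 - t) *s z) \<le> t * norm2 y + (1 - t) * norm2 z"
    using convex by (intro norm2_convex) auto
  also have "\<dots> \<le> t * norm2 x + (1 - t) * norm2 x"
    using convex by (intro add_mono mult_left_mono) auto
  finally show ?case by (simp add: algebra_simps)
qed

lemma inner_orbit_hull_fixed_point:
  assumes "T e = e"
  shows "y \<in> orbit_hull x \<Longrightarrow> inner e y = inner e x"
proof (induction rule: orbit_hull.induct)
  case (orbit k)
  then show ?case using inner_funpow_fixed_point[OF assms] .
next
  case (convex y z t)
  then show ?case by (simp add: inner_add_right inner_scale_right flip: distrib_right of_real_add)
qed

definition orbit_mean :: "nat \<Rightarrow> nat \<Rightarrow> 'a \<Rightarrow> 'a" where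
  "orbit_mean j n y = of_real (1 / real n) *s (\<Sum>k<n. (T ^^ (j + k)) y)"

lemma orbit_mean_linear: "module_hom scale scale (orbit_mean j n)"
  unfolding module_hom_iff orbit_mean_def
  by (simp add: module_axioms funpow_add funpow_scale sum.distrib scale_right_distrib
      scale_sum_right scale_left_commute)

lemmas orbit_mean_add = module_hom.add[OF orbit_mean_linear]
  and orbit_mean_scale = module_hom.scale[OF orbit_mean_linear]

lemma orbit_mean_in_orbit_hull:
  assumes "y \<in> orbit_hull x" and "n \<ge> 1"
  shows "orbit_mean j n y \<in> orbit_hull x" and "norm2 (orbit_mean j n y) \<le> norm2 y"
proof -
  have "orbit_mean j n y \<in> {z \<in> orbit_hull x. norm2 z \<le> norm2 y}"
    unfolding orbit_mean_def
    using assms by (intro convex_set_mean convex_set_norm2_sublevel convex_set_orbit_hull)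
      (auto intro: orbit_hull_funpow_closed norm2_funpow_le)
  then show "orbit_mean j n y \<in> orbit_hull x" and "norm2 (orbit_mean j n y) \<le> norm2 y"
    by auto
qed

lemma Re_inner_orbit_mean:
  "Re (inner x (orbit_mean j n y)) = (\<Sum>k<n. Re (inner x ((T ^^ (j + k)) y))) / real n"
  by (simp add: orbit_mean_def inner_scale_right inner_sum_right)

lemma norm2_orbit_mean_T_diff:
  "norm2 (orbit_mean j n (T y) - orbit_mean j n y) \<le> 4 * norm2 y / (real n)\<^sup>2"
proof -
  define f where "f k = (T ^^ (j + k)) y" for k
  have "orbit_mean j n (T y) - orbit_mean j n y = of_real (1 / real n) *s (\<Sum>k<n. f (Suc k) - f k)"
    unfolding orbit_mean_def f_def
    by (simp add: scale_right_diff_distrib sum_subtractf funpow_Suc_right del: funpow.simps)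
  also have "\<dots> = of_real (1 / real n) *s (f n - f 0)"
    by (simp only: sum_lessThan_telescope)
  finally have "norm2 (orbit_mean j n (T y) - orbit_mean j n y) = norm2 (f n - f 0) / (real n)\<^sup>2"
    by (simp add: norm2_scale norm_divide power_divide)
  also have "\<dots> \<le> (2 * norm2 y + 2 * norm2 y) / (real n)\<^sup>2"
    using norm2_diff_le[of "f n" "f 0"] norm2_funpow_le[of "j + n" y] norm2_funpow_le[of "j" y]
    by (intro divide_right_mono) (auto simp: f_def)
  finally show ?thesis by simp
qed

lemma norm2_orbit_mean_funpow_diff:
  "\<exists>K\<ge>0. \<forall>j n. norm2 (orbit_mean j n ((T ^^ i) x) - orbit_mean j n x) \<le> K / (real n)\<^sup>2"
proof (induction i)
  case 0
  show ?case by (intro exI[of _ 0]) simp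
next
  case (Suc i)
  then obtain K where K: "K \<ge> 0"
    "\<And>j n. norm2 (orbit_mean j n ((T ^^ i) x) - orbit_mean j n x) \<le> K / (real n)\<^sup>2"
    by blast
  have "norm2 (orbit_mean j n ((T ^^ Suc i) x) - orbit_mean j n x)
      \<le> (8 * norm2 x + 2 * K) / (real n)\<^sup>2" for j n
  proof -
    let ?m = "orbit_mean j n"
    have "norm2 (?m ((T ^^ Suc i) x) - ?m x)
        \<le> 2 * norm2 (?m (T ((T ^^ i) x)) - ?m ((T ^^ i) x)) + 2 * norm2 (?m ((T ^^ i) x) - ?m x)"
      using norm2_add_le[of "?m (T ((T ^^ i) x)) - ?m ((T ^^ i) x)" "?m ((T ^^ i) x) - ?m x"] by simp
    also have "\<dots> \<le> 2 * (4 * norm2 x / (real n)\<^sup>2) + 2 * (K / (real n)\<^sup>2)"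
    proof -
      have "4 * norm2 ((T ^^ i) x) / (real n)\<^sup>2 \<le> 4 * norm2 x / (real n)\<^sup>2"
        using norm2_funpow_le[of i x] by (simp add: divide_right_mono)
      then show ?thesis
        using norm2_orbit_mean_T_diff[of j n "(T ^^ i) x"] K(2)[of j n] by linarith
    qed
    finally show ?thesis
      by (simp add: add_divide_distrib)
  qed
  then show ?case
    using K(1) norm2_nonneg[of x] by (intro exI[of _ "8 * norm2 x + 2 * K"]) auto
qed

lemma norm2_orbit_mean_orbit_hull_diff:
  "y \<in> orbit_hull x \<Longrightarrow> \<exists>K\<ge>0. \<forall>j n. norm2 (orbit_mean j n y - orbit_mean j n x) \<le> K / (real n)\<^sup>2"
proof (induction rule: orbit_hull.induct)
  case (orbit k)
  then show ?case by (rule norm2_orbit_mean_funpow_diff)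
next
  case (convex y z t)
  obtain Ky Kz where Ky: "\<And>j n. norm2 (orbit_mean j n y - orbit_mean j n x) \<le> Ky / (real n)\<^sup>2"
    and Kz: "\<And>j n. norm2 (orbit_mean j n z - orbit_mean j n x) \<le> Kz / (real n)\<^sup>2"
    and "Ky \<ge> 0"
    using convex.IH by blast
  define K where "K = max Ky Kz"
  have K: "norm2 (orbit_mean j n y - orbit_mean j n x) \<le> K / (real n)\<^sup>2"
    "norm2 (orbit_mean j n z - orbit_mean j n x) \<le> K / (real n)\<^sup>2" for j n
    using order_trans[OF Ky divide_right_mono] order_trans[OF Kz divide_right_mono]
    by (simp_all add: K_def)
  have "norm2 (orbit_mean j n (of_real t *s y + of_real (1 - t) *s z) - orbit_mean j n x)
      \<le> K / (real n)\<^sup>2" for j n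
  proof -
    let ?u = "orbit_mean j n y - orbit_mean j n x" and ?v = "orbit_mean j n z - orbit_mean j n x"
    have "orbit_mean j n (of_real t *s y + of_real (1 - t) *s z) - orbit_mean j n x
        = of_real t *s ?u + of_real (1 - t) *s ?v"
      by (simp only: orbit_mean_add orbit_mean_scale convex_combination_diff)
    then have "norm2 (orbit_mean j n (of_real t *s y + of_real (1 - t) *s z) - orbit_mean j n x)
        \<le> t * norm2 ?u + (1 - t) * norm2 ?v"
      using convex.hyps norm2_convex by simp
    also have "\<dots> \<le> t * (K / (real n)\<^sup>2) + (1 - t) * (K / (real n)\<^sup>2)"
      using convex.hyps K by (intro add_mono mult_left_mono) auto
    also have "\<dots> = K / (real n)\<^sup>2"
      by (simp only: left_diff_distrib mult_1 add_diff_eq add_diff_cancel_left')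
    finally show ?thesis .
  qed
  moreover have "K \<ge> 0"
    using \<open>Ky \<ge> 0\<close> by (simp add: K_def)
  ultimately show ?case
    by blast
qed

lemma norm2_orbit_mean_near_minimizer:
  assumes "w \<in> orbit_hull x" and near_min: "\<And>z. z \<in> orbit_hull x \<Longrightarrow> norm2 w < norm2 z + \<delta>"
    and "n \<ge> 1"
  shows "norm2 (orbit_mean j n x - w) \<le> 2 * norm2 (orbit_mean j n w - orbit_mean j n x) + 8 * \<delta>"
proof -
  have "norm2 (orbit_mean j n w - w) < 4 * \<delta>"
    using assms orbit_mean_in_orbit_hull[OF assms(1,3)]
    by (intro near_minimizer_close[OF convex_set_orbit_hull]) auto
  moreover have "norm2 (orbit_mean j n x - w)
      \<le> 2 * norm2 (orbit_mean j n w - w) + 2 * norm2 (orbit_mean j n w - orbit_mean j n x)"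
    using norm2_diff_le[of "orbit_mean j n w - w" "orbit_mean j n w - orbit_mean j n x"] by simp
  ultimately show ?thesis
    by linarith
qed

lemma orbit_mean_Re_inner_gt:
  fixes x :: 'a
  assumes "T e = e" and "norm2 e = 1" and "\<epsilon> > 0"
  obtains n where "n \<ge> 1" and "\<And>j. Re (inner x (orbit_mean j n x)) > (cmod (inner e x))\<^sup>2 - \<epsilon>"
proof -
  define M where "M = norm2 x"
  define t where "t = min 1 (\<epsilon> / (5 * (M + 1)))"
  define \<delta> where "\<delta> = t * \<epsilon> / 18"
  have M: "M \<ge> 0"
    unfolding M_def by (rule norm2_nonneg)
  have t: "0 < t" "t \<le> 1" "t * M \<le> \<epsilon> / 5"
  proof -
    show "0 < t" "t \<le> 1"
      using assms(3) M by (simp_all add: t_def)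
    have "t * M \<le> \<epsilon> / (5 * (M + 1)) * (M + 1)"
      using M \<open>0 < t\<close> by (intro mult_mono) (auto simp: t_def)
    also have "\<epsilon> / (5 * (M + 1)) * (M + 1) = \<epsilon> / 5"
      using M by (simp add: field_simps add_nonneg_pos)
    finally show "t * M \<le> \<epsilon> / 5" .
  qed
  obtain w where w: "w \<in> orbit_hull x"
    and near_min: "\<And>z. z \<in> orbit_hull x \<Longrightarrow> norm2 w < norm2 z + \<delta>"
    using exists_near_minimizer[of "orbit_hull x" \<delta>] self_in_orbit_hull t assms(3)
    by (auto simp: \<delta>_def)
  obtain K where K: "\<And>j n. norm2 (orbit_mean j n w - orbit_mean j n x) \<le> K / (real n)\<^sup>2"
    using norm2_orbit_mean_orbit_hull_diff[OF w] by blast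
  obtain n where n: "n \<ge> 1" "K / (real n)\<^sup>2 \<le> t * \<epsilon> / 4"
    using exists_inverse_square_le[of "t * \<epsilon> / 4" K] t assms(3) by auto
  have "(cmod (inner e x))\<^sup>2 \<le> norm2 w"
    using cmod_inner_unit_le[OF assms(2), of w] inner_orbit_hull_fixed_point[OF assms(1) w] by simp
  moreover have "norm2 (x - w) \<le> 4 * M"
    using norm2_diff_le[of x w] norm2_orbit_hull_le[OF w] by (simp add: M_def)
  then have "t * norm2 (x - w) / 2 \<le> 2 * t * M"
    using t(1) by simp
  ultimately have Re_w: "Re (inner x w) > (cmod (inner e x))\<^sup>2 - \<delta> / (2 * t) - 2 * t * M"
    using near_minimizer_Re_inner[OF convex_set_orbit_hull w self_in_orbit_hull near_min t(1,2)]
    by linarith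
  have "Re (inner x (orbit_mean j n x)) > (cmod (inner e x))\<^sup>2 - \<epsilon>" for j
  proof -
    define D where "D = orbit_mean j n x - w"
    have "norm2 D \<le> t * \<epsilon> / 2 + 8 * \<delta>"
      unfolding D_def using norm2_orbit_mean_near_minimizer[OF w near_min n(1), of j] K[of j n] n(2)
      by linarith
    then have "norm2 D / t \<le> \<epsilon> / 2 + 4 * \<epsilon> / 9"
      using t(1) by (simp add: \<delta>_def divide_right_mono field_simps)
    moreover have "- (t * M + norm2 D / t) \<le> 2 * Re (inner x D)"
      using two_Re_inner_ge[OF t(1)] by (simp add: M_def)
    moreover have "Re (inner x (orbit_mean j n x)) = Re (inner x w) + Re (inner x D)"
      by (simp add: D_def inner_diff_right)
    moreover have "\<delta> / (2 * t) = \<epsilon> / 36"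
      using t(1) by (simp add: \<delta>_def)
    (* the error terms delta/(2t), 5tM/2 and norm2 D/(2t) add up to at most eps *)
    ultimately show ?thesis
      using Re_w t(3) by linarith
  qed
  then show ?thesis
    using that n(1) by blast
qed

theorem relatively_dense_recurrence:
  assumes "T e = e" and "norm2 e = 1" and "\<epsilon> > 0"
  shows "relatively_dense {k. k \<ge> 1 \<and> Re (inner x ((T ^^ k) x)) > (cmod (inner e x))\<^sup>2 - \<epsilon>}"
proof -
  obtain n where n: "n \<ge> 1" "\<And>j. Re (inner x (orbit_mean j n x)) > (cmod (inner e x))\<^sup>2 - \<epsilon>"
    using orbit_mean_Re_inner_gt[OF assms, where x = x] by blast
  have "\<exists>k<n. Re (inner x ((T ^^ (j + k)) x)) > (cmod (inner e x))\<^sup>2 - \<epsilon>" for j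
    using exists_gt_of_mean_gt[OF n(1)] n(2)[of j] unfolding Re_inner_orbit_mean by blast
  then show ?thesis
    by (rule relatively_dense_intro[OF n(1)])
qed

end

lemma unital_star_algebra_star_one:
  assumes "unital_star_algebra sm st"
  shows "st 1 = 1"
proof -
  have st_st: "st (st x) = x" and st_mult: "st (x * y) = st y * st x" for x y
    using assms by (simp_all add: unital_star_algebra_def)
  have "st 1 = st 1 * st (st 1)"
    by (simp add: st_st)
  also have "\<dots> = st (st 1 * 1)"
    by (simp only: st_mult)
  also have "\<dots> = 1"
    by (simp add: st_st)
  finally show ?thesis .
qed

lemma star_dynamical_system_semi_inner_contraction:
  assumes "star_dynamical_system sm st \<phi> \<tau>"
  shows "semi_inner_contraction sm (\<lambda>x y. \<phi> (st x * y)) \<tau>"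
proof -
  have alg: "unital_star_algebra sm st" and "state sm st \<phi>" and "complex_linear sm sm \<tau>"
    and contr: "\<And>x. Re (\<phi> (st (\<tau> x) * \<tau> x)) \<le> Re (\<phi> (st x * x))"
    using assms by (simp_all add: star_dynamical_system_def)
  then have \<phi>: "\<And>x y. \<phi> (x + y) = \<phi> x + \<phi> y" "\<And>c x. \<phi> (sm c x) = c * \<phi> x"
    "\<And>x. Im (\<phi> (st x * x)) = 0" "\<And>x. Re (\<phi> (st x * x)) \<ge> 0"
    and \<tau>: "\<And>x y. \<tau> (x + y) = \<tau> x + \<tau> y" "\<And>c x. \<tau> (sm c x) = sm c (\<tau> x)"
    by (simp_all add: state_def complex_linear_def)
  have st: "\<And>x y. st (x + y) = st x + st y" "\<And>c x. st (sm c x) = sm (cnj c) (st x)"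
    and sm_mult: "\<And>c x y. sm c x * y = sm c (x * y)" "\<And>c x y. x * sm c y = sm c (x * y)"
    using alg unfolding unital_star_algebra_def by metis+
  interpret module sm
    using alg by unfold_locales (simp_all add: unital_star_algebra_def)
  interpret semi_inner_space sm "\<lambda>x y. \<phi> (st x * y)"
    by unfold_locales (simp_all add: \<phi> st sm_mult distrib_left distrib_right)
  show ?thesis
    by unfold_locales (simp_all add: module_hom_iff module_axioms \<tau> contr norm2_def)
qed

theorem theorem4p1:
  fixes sm :: "complex \<Rightarrow> 'a::ring_1 \<Rightarrow> 'a" and st :: "'a \<Rightarrow> 'a"
    and \<phi> :: "'a \<Rightarrow> complex" and \<tau> :: "'a \<Rightarrow> 'a" and A :: 'a and \<epsilon> :: real
  assumes "star_dynamical_system sm st \<phi> \<tau>" and "\<epsilon> > 0"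
  shows "relatively_dense {k::nat. k \<ge> 1 \<and> cmod (\<phi> (st A * (\<tau> ^^ k) A)) > (cmod (\<phi> A))\<^sup>2 - \<epsilon>}"
proof -
  interpret semi_inner_contraction sm "\<lambda>x y. \<phi> (st x * y)" \<tau>
    using assms(1) by (rule star_dynamical_system_semi_inner_contraction)
  have "st 1 = 1" and "\<tau> 1 = 1" and "\<phi> 1 = 1"
    using assms(1) unital_star_algebra_star_one by (auto simp: star_dynamical_system_def state_def)
  then have "relatively_dense {k. k \<ge> 1 \<and> Re (\<phi> (st A * (\<tau> ^^ k) A)) > (cmod (\<phi> A))\<^sup>2 - \<epsilon>}"
    using relatively_dense_recurrence[of 1 \<epsilon> A] assms(2) by (simp add: norm2_def)
  then show ?thesis
    by (rule relatively_dense_mono) (auto intro: less_le_trans complex_Re_le_cmod)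
qed

end
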